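(* Let $G$ be a simple graph of order $n$ and let $\alpha\ge2$ be an integer. If $\lambda(G)\le\frac{n}{\alpha}$, then $$i_\alpha(G)\ge\left(\frac{1}{\alpha(\alpha-1)}-\frac{1}{n}\right)\frac{(\alpha-1)(\alpha-2)}{\alpha}\left(\frac{n}{\alpha-1}\right)^{\alpha}.$$
   Context: $\lambda(G)$ is the spectral radius of the adjacency matrix of $G$. For a positive integer $s$, $i_s(G)$ denotes the number of independent sets of size $s$ in $G$. *)

theory Defs
  imports "Jordan_Normal_Form.Spectral_Radius"
begin

definition simple_graph :: "nat \<Rightarrow> (nat \<Rightarrow> nat \<Rightarrow> bool) \<Rightarrow> bool" where
  "simple_graph n E \<longleftrightarrow> (\<forall>u<n. \<forall>v<n. E u v \<longleftrightarrow> E v u) \<and> (\<forall>v<n. \<not> E v v)"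

definition adj_matrix :: "nat \<Rightarrow> (nat \<Rightarrow> nat \<Rightarrow> bool) \<Rightarrow> complex mat" where
  "adj_matrix n E = mat n n (\<lambda>(i, j). if E i j then 1 else 0)"

definition graph_spectral_radius :: "nat \<Rightarrow> (nat \<Rightarrow> nat \<Rightarrow> bool) \<Rightarrow> real" where
  "graph_spectral_radius n E = spectral_radius (adj_matrix n E)"

definition independent_set :: "nat \<Rightarrow> (nat \<Rightarrow> nat \<Rightarrow> bool) \<Rightarrow> nat set \<Rightarrow> bool" where
  "independent_set n E S \<longleftrightarrow> S \<subseteq> {0..<n} \<and> (\<forall>u\<in>S. \<forall>v\<in>S. \<not> E u v)"

definition num_indep_sets :: "nat \<Rightarrow> (nat \<Rightarrow> nat \<Rightarrow> bool) \<Rightarrow> nat \<Rightarrow> nat" where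
  "num_indep_sets n E s = card {S. independent_set n E S \<and> card S = s}"

end

theory Submission
  imports Defs "HOL-Analysis.Convex"
begin

text \<open>Independent sets of G are the cliques of its complement H. Writing k(t) for the number
  of t-cliques of H, double counting pairs (clique, common neighbour) together with
  Cauchy-Schwarz gives the Moon-Moser type inequality
  ((t+1) k(t+1))^2 \<le> k(t) (n k(t+1) + t (t+2) k(t+2)),
  which turns a lower bound on the number k(2) of edges of H into a lower bound on each k(t).
  The number of edges of G is at most n \<lambda>(G) / 2 because the average degree d never exceeds
  the spectral radius: the number of walks of length 2^j is at least n d^(2^j), whereas it is
  O(c^(2^j)) for every c > \<lambda>(G).\<close>

section \<open>Walks in a weighted digraph\<close>

fun walk_weight :: "nat \<Rightarrow> (nat \<Rightarrow> nat \<Rightarrow> real) \<Rightarrow> nat \<Rightarrow> nat \<Rightarrow> nat \<Rightarrow> real" where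
  "walk_weight n f 0 i j = (if i = j then 1 else 0)"
| "walk_weight n f (Suc k) i j = (\<Sum>l\<in>{0..<n}. walk_weight n f k i l * f l j)"

definition total_walk_weight :: "nat \<Rightarrow> (nat \<Rightarrow> nat \<Rightarrow> real) \<Rightarrow> nat \<Rightarrow> real" where
  "total_walk_weight n f k = (\<Sum>i\<in>{0..<n}. \<Sum>j\<in>{0..<n}. walk_weight n f k i j)"

lemma power_mat_entry_walk_weight:
  assumes "i < n" "j < n"
  shows "(mat n n (\<lambda>(i,j). complex_of_real (f i j)) ^\<^sub>m k) $$ (i,j) = complex_of_real (walk_weight n f k i j)"
  using assms
proof (induction k arbitrary: i j)
  case 0
  then show ?case by simp
next
  case (Suc k)
  let ?A = "mat n n (\<lambda>(i,j). complex_of_real (f i j))"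
  have dims: "dim_row (?A ^\<^sub>m k) = n" "dim_col (?A ^\<^sub>m k) = n"
    by auto
  have "(?A ^\<^sub>m Suc k) $$ (i,j) = row (?A ^\<^sub>m k) i \<bullet> col ?A j"
    using Suc.prems dims by simp
  also have "\<dots> = (\<Sum>l\<in>{0..<n}. (?A ^\<^sub>m k) $$ (i,l) * ?A $$ (l,j))"
    unfolding scalar_prod_def using Suc.prems dims by (intro sum.cong) auto
  also have "\<dots> = (\<Sum>l\<in>{0..<n}. complex_of_real (walk_weight n f k i l * f l j))"
    using Suc.prems Suc.IH by (intro sum.cong) auto
  also have "\<dots> = complex_of_real (walk_weight n f (Suc k) i j)"
    by (simp add: of_real_sum)
  finally show ?case .
qed

lemma walk_weight_add:
  assumes "j < n"
  shows "walk_weight n f (p + q) i j = (\<Sum>l\<in>{0..<n}. walk_weight n f p i l * walk_weight n f q l j)"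
  using assms
proof (induction q arbitrary: j)
  case 0
  then show ?case by (simp add: if_distrib cong: if_cong)
next
  case (Suc q)
  have "walk_weight n f (p + Suc q) i j
      = (\<Sum>m\<in>{0..<n}. (\<Sum>l\<in>{0..<n}. walk_weight n f p i l * walk_weight n f q l m) * f m j)"
    using Suc.IH by (auto intro: sum.cong)
  also have "\<dots> = (\<Sum>m\<in>{0..<n}. \<Sum>l\<in>{0..<n}. walk_weight n f p i l * (walk_weight n f q l m * f m j))"
    by (simp only: sum_distrib_right mult.assoc)
  also have "\<dots> = (\<Sum>l\<in>{0..<n}. walk_weight n f p i l * (\<Sum>m\<in>{0..<n}. walk_weight n f q l m * f m j))"
    by (subst sum.swap) (simp only: sum_distrib_left)
  finally show ?case by simp
qed

lemma walk_weight_1: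
  assumes "i < n"
  shows "walk_weight n f 1 i j = f i j"
proof -
  have "walk_weight n f 1 i j = (\<Sum>l\<in>{0..<n}. (if i = l then 1 else 0) * f l j)"
    by (simp add: One_nat_def)
  also have "\<dots> = (\<Sum>l\<in>{0..<n}. if l = i then f l j else 0)"
    by (intro sum.cong) auto
  finally show ?thesis using assms by simp
qed

lemma walk_weight_sym:
  assumes sym: "\<And>i j. i < n \<Longrightarrow> j < n \<Longrightarrow> f i j = f j i"
  shows "i < n \<Longrightarrow> j < n \<Longrightarrow> walk_weight n f k i j = walk_weight n f k j i"
proof (induction k arbitrary: i j)
  case 0
  then show ?case by simp
next
  case (Suc k)
  have "walk_weight n f (1 + k) j i = (\<Sum>l\<in>{0..<n}. walk_weight n f 1 j l * walk_weight n f k l i)"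
    using Suc.prems by (intro walk_weight_add) simp
  also have "\<dots> = (\<Sum>l\<in>{0..<n}. walk_weight n f k i l * f l j)"
  proof (rule sum.cong[OF refl])
    fix l assume "l \<in> {0..<n}"
    then show "walk_weight n f 1 j l * walk_weight n f k l i = walk_weight n f k i l * f l j"
      using Suc.prems Suc.IH[of l i] sym[of j l] walk_weight_1[of j n f l] by (simp add: mult.commute)
  qed
  finally show ?case by simp
qed

lemma walk_weight_divide: "walk_weight n (\<lambda>i j. f i j / c) k i j = walk_weight n f k i j / c ^ k"
  by (induction k arbitrary: j) (simp_all add: sum_divide_distrib mult.commute)

lemma walk_weight_nonneg: "(\<And>i j. f i j \<ge> 0) \<Longrightarrow> walk_weight n f k i j \<ge> 0"
  by (induction k arbitrary: j) (auto intro!: sum_nonneg)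

lemma total_walk_weight_1: "total_walk_weight n f 1 = (\<Sum>i\<in>{0..<n}. \<Sum>j\<in>{0..<n}. f i j)"
  unfolding total_walk_weight_def by (intro sum.cong refl) (use walk_weight_1 in auto)

text \<open>Since the walk matrix is symmetric, W(2k) is the sum of the squared row sums of
  the walks of length k, so Cauchy-Schwarz applies.\<close>

lemma total_walk_weight_square_le:
  assumes sym: "\<And>i j. i < n \<Longrightarrow> j < n \<Longrightarrow> f i j = f j i"
  shows "(total_walk_weight n f k)\<^sup>2 \<le> real n * total_walk_weight n f (k + k)"
proof -
  let ?w = "walk_weight n f k"
  let ?r = "\<lambda>l. \<Sum>j\<in>{0..<n}. ?w l j"
  have "total_walk_weight n f (k + k) = (\<Sum>i\<in>{0..<n}. \<Sum>j\<in>{0..<n}. \<Sum>l\<in>{0..<n}. ?w i l * ?w l j)"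
    unfolding total_walk_weight_def by (intro sum.cong refl) (simp add: walk_weight_add)
  also have "\<dots> = (\<Sum>i\<in>{0..<n}. \<Sum>l\<in>{0..<n}. ?w i l * ?r l)"
    by (rule sum.cong[OF refl], subst sum.swap) (simp only: sum_distrib_left)
  also have "\<dots> = (\<Sum>l\<in>{0..<n}. (\<Sum>i\<in>{0..<n}. ?w i l) * ?r l)"
    by (subst sum.swap) (simp only: sum_distrib_right)
  also have "\<dots> = (\<Sum>l\<in>{0..<n}. (?r l)\<^sup>2)"
    using walk_weight_sym[OF sym] by (intro sum.cong refl) (auto simp: power2_eq_square intro!: sum.cong)
  finally have "total_walk_weight n f (k + k) = (\<Sum>l\<in>{0..<n}. (?r l)\<^sup>2)" .
  moreover have "(total_walk_weight n f k)\<^sup>2 \<le> (\<Sum>l\<in>{0..<n}. (?r l)\<^sup>2) * card {0..<n}"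
    unfolding total_walk_weight_def by (rule sum_squared_le_sum_of_squares)
  ultimately show ?thesis by (simp add: mult.commute)
qed

lemma total_walk_weight_pow2_ge:
  assumes sym: "\<And>i j. i < n \<Longrightarrow> j < n \<Longrightarrow> f i j = f j i"
    and nonneg: "\<And>i j. f i j \<ge> 0" and n: "n > 0"
  shows "total_walk_weight n f (2 ^ j) \<ge> real n * (total_walk_weight n f 1 / real n) ^ (2 ^ j)"
proof (induction j)
  case 0
  then show ?case using n by simp
next
  case (Suc j)
  let ?d = "total_walk_weight n f 1 / real n"
  have "?d \<ge> 0"
    unfolding total_walk_weight_def by (intro divide_nonneg_nonneg sum_nonneg walk_weight_nonneg nonneg) simp
  have "real n * (real n * ?d ^ 2 ^ Suc j) = (real n * ?d ^ 2 ^ j)\<^sup>2"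
    by (simp add: power2_eq_square mult_2 power_add)
  also have "\<dots> \<le> (total_walk_weight n f (2 ^ j))\<^sup>2"
    using \<open>?d \<ge> 0\<close> Suc.IH by (intro power_mono) auto
  also have "\<dots> \<le> real n * total_walk_weight n f (2 ^ Suc j)"
    using total_walk_weight_square_le[of n f "2 ^ j", OF sym] by (simp add: mult_2)
  finally show ?case using n by simp
qed

section \<open>Average degree and spectral radius\<close>

lemma spectral_radius_divide_le:
  fixes f :: "nat \<Rightarrow> nat \<Rightarrow> real"
  assumes n: "n > 0" and c: "c > 0"
  shows "c * spectral_radius (mat n n (\<lambda>(i,j). complex_of_real (f i j / c)))
    \<le> spectral_radius (mat n n (\<lambda>(i,j). complex_of_real (f i j)))"
proof -
  let ?A = "mat n n (\<lambda>(i,j). complex_of_real (f i j))"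
  let ?B = "mat n n (\<lambda>(i,j). complex_of_real (f i j / c))"
  have A: "?A \<in> carrier_mat n n" and B: "?B \<in> carrier_mat n n" by auto
  obtain ev where ev: "ev \<in> spectrum ?B" "spectral_radius ?B = norm ev"
    using spectral_radius_mem_max(1)[OF B n] by auto
  then obtain v where "eigenvector ?B v ev"
    unfolding spectrum_def eigenvalue_def by auto
  then have v: "v \<in> carrier_vec n" "v \<noteq> 0\<^sub>v n" "?B *\<^sub>v v = ev \<cdot>\<^sub>v v"
    unfolding eigenvector_def using B by auto
  have "?A *\<^sub>v v = (complex_of_real c * ev) \<cdot>\<^sub>v v"
  proof (rule eq_vecI)
    fix i assume "i < dim_vec ((complex_of_real c * ev) \<cdot>\<^sub>v v)"
    then have i: "i < n" using v by auto
    have "(?A *\<^sub>v v) $ i = (\<Sum>l\<in>{0..<n}. complex_of_real c * (complex_of_real (f i l / c) * v $ l))"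
      using i v c by (auto simp: scalar_prod_def intro!: sum.cong)
    also have "\<dots> = complex_of_real c * (?B *\<^sub>v v) $ i"
      using i v(1) by (simp add: scalar_prod_def sum_distrib_left del: of_real_divide)
    also have "(?B *\<^sub>v v) $ i = ev * v $ i"
      using v i by (metis carrier_vecD index_smult_vec(1))
    finally show "(?A *\<^sub>v v) $ i = ((complex_of_real c * ev) \<cdot>\<^sub>v v) $ i"
      using i v by simp
  qed (use v in simp)
  then have "eigenvalue ?A (complex_of_real c * ev)"
    unfolding eigenvalue_def eigenvector_def using v A by auto
  then have "norm (complex_of_real c * ev) \<le> spectral_radius ?A"
    using spectral_radius_mem_max(2)[OF A n] unfolding spectrum_def by auto
  then show ?thesis using ev c by (simp add: norm_mult)
qed

lemma walk_weight_le_geometric: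
  assumes n: "n > 0"
    and c: "spectral_radius (mat n n (\<lambda>(i,j). complex_of_real (f i j))) < c"
  obtains C where "\<And>k i j. i < n \<Longrightarrow> j < n \<Longrightarrow> walk_weight n f k i j \<le> C * c ^ k"
proof -
  let ?A = "mat n n (\<lambda>(i,j). complex_of_real (f i j))"
  let ?B = "mat n n (\<lambda>(i,j). complex_of_real (f i j / c))"
  have B: "?B \<in> carrier_mat n n" by auto
  have "spectral_radius ?A \<ge> 0"
    using spectral_radius_mem_max(1)[of ?A n] n by auto
  then have c0: "c > 0" using c by linarith
  have "c * spectral_radius ?B < c * 1"
    using spectral_radius_divide_le[OF n c0, of f] c by simp
  then have "spectral_radius ?B < 1"
    using c0 by (simp only: mult_less_cancel_left_pos)
  then obtain C where C: "\<And>k. norm_bound (?B ^\<^sub>m k) C"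
    using spectral_radius_jnf_norm_bound_less_1_upper_triangular[OF B] by auto
  have "walk_weight n f k i j \<le> C * c ^ k" if ij: "i < n" "j < n" for k i j
  proof -
    have "(?B ^\<^sub>m k) $$ (i,j) = complex_of_real (walk_weight n f k i j / c ^ k)"
      using power_mat_entry_walk_weight[OF ij, of "\<lambda>i j. f i j / c" k] by (simp only: walk_weight_divide)
    moreover have "norm ((?B ^\<^sub>m k) $$ (i,j)) \<le> C"
      using C[of k] ij B unfolding norm_bound_def by auto
    ultimately have "walk_weight n f k i j / c ^ k \<le> C"
      by (metis abs_le_D1 norm_of_real)
    then show ?thesis using c0 by (simp add: divide_le_eq mult.commute)
  qed
  then show ?thesis by (rule that)
qed

lemma average_row_sum_le_spectral_radius:
  assumes n: "n > 0" and sym: "\<And>i j. i < n \<Longrightarrow> j < n \<Longrightarrow> f i j = f j i"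
    and nonneg: "\<And>i j. f i j \<ge> 0"
  shows "total_walk_weight n f 1 / real n \<le> spectral_radius (mat n n (\<lambda>(i,j). complex_of_real (f i j)))"
    (is "?d \<le> ?\<rho>")
proof (rule ccontr)
  define d where "d = ?d"
  assume "\<not> ?d \<le> ?\<rho>"
  moreover have "?\<rho> \<ge> 0"
    using spectral_radius_mem_max(1)[OF _ n, of "mat n n (\<lambda>(i,j). complex_of_real (f i j))"] by auto
  moreover define c where "c = (?\<rho> + d) / 2"
  ultimately have c: "?\<rho> < c" "c < d" "c > 0"
    unfolding d_def by auto
  obtain C where C: "\<And>k i j. i < n \<Longrightarrow> j < n \<Longrightarrow> walk_weight n f k i j \<le> C * c ^ k"
    using walk_weight_le_geometric[OF n c(1)] by blast
  have bounded: "(d / c) ^ 2 ^ j \<le> real n * C" for j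
  proof -
    have "real n * d ^ 2 ^ j \<le> total_walk_weight n f (2 ^ j)"
      unfolding d_def by (rule total_walk_weight_pow2_ge[OF sym nonneg n])
    also have "\<dots> \<le> (\<Sum>i\<in>{0..<n}. \<Sum>l\<in>{0..<n}. C * c ^ 2 ^ j)"
      unfolding total_walk_weight_def using C by (intro sum_mono) auto
    also have "\<dots> = real n * (real n * C * c ^ 2 ^ j)"
      by simp
    finally have "d ^ 2 ^ j \<le> real n * C * c ^ 2 ^ j"
      using n by simp
    then show ?thesis
      using c(3) by (simp add: power_divide divide_le_eq)
  qed
  obtain m where m: "real n * C < (d / c) ^ m"
    using real_arch_pow[of "d / c"] c by auto
  have "(d / c) ^ m \<le> (d / c) ^ (2 ^ m)"
    using c by (intro power_increasing) (auto simp: less_imp_le)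
  with m bounded[of m] show False by linarith
qed

lemma adj_matrix_eq_mat_of_real:
  "adj_matrix n E = mat n n (\<lambda>(i,j). complex_of_real (if E i j then 1 else 0))"
  unfolding adj_matrix_def by (intro eq_matI) auto

lemma degree_sum_le_spectral_radius:
  assumes G: "simple_graph n E"
  shows "total_walk_weight n (\<lambda>i j. if E i j then 1 else 0) 1 \<le> real n * graph_spectral_radius n E"
proof (cases "n = 0")
  case False
  then have "total_walk_weight n (\<lambda>i j. if E i j then 1 else 0) 1 / real n \<le> graph_spectral_radius n E"
    unfolding graph_spectral_radius_def adj_matrix_eq_mat_of_real
    using G by (intro average_row_sum_le_spectral_radius) (auto simp: simple_graph_def)
  then show ?thesis using False by (simp add: divide_le_eq mult.commute)
qed (simp add: total_walk_weight_def)

section \<open>Counting cliques\<close>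

definition cliques :: "nat \<Rightarrow> (nat \<Rightarrow> nat \<Rightarrow> bool) \<Rightarrow> nat \<Rightarrow> nat set set" where
  "cliques n F s = {S. S \<subseteq> {0..<n} \<and> card S = s \<and> (\<forall>u\<in>S. \<forall>v\<in>S. u \<noteq> v \<longrightarrow> F u v)}"

definition common_neighbours :: "nat \<Rightarrow> (nat \<Rightarrow> nat \<Rightarrow> bool) \<Rightarrow> nat set \<Rightarrow> nat set" where
  "common_neighbours n F R = {w\<in>{0..<n}. w \<notin> R \<and> (\<forall>u\<in>R. F u w)}"

lemma finite_cliques: "finite (cliques n F s)"
  by (rule finite_subset[of _ "Pow {0..<n}"]) (auto simp: cliques_def)

lemma finite_clique: "S \<in> cliques n F s \<Longrightarrow> finite S"
  unfolding cliques_def by (auto intro: finite_subset)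

lemma finite_common_neighbours: "finite (common_neighbours n F R)"
  unfolding common_neighbours_def by simp

lemma cliques_1: "cliques n F 1 = (\<lambda>u. {u}) ` {0..<n}"
  unfolding cliques_def by (auto simp: card_1_singleton_iff)

lemma card_cliques_1: "card (cliques n F 1) = n"
  unfolding cliques_1 by (subst card_image) (auto simp: inj_on_def)

lemma bij_betw_clique_extensions:
  assumes sym: "\<And>u v. F u v = F v u"
  shows "bij_betw (\<lambda>(R, v). (insert v R, v))
    (SIGMA R:cliques n F s. common_neighbours n F R) (SIGMA S:cliques n F (Suc s). S)"
proof (rule bij_betw_byWitness[where f' = "\<lambda>(S, v). (S - {v}, v)"])
  show "(\<lambda>(R, v). (insert v R, v)) ` (SIGMA R:cliques n F s. common_neighbours n F R)
      \<subseteq> (SIGMA S:cliques n F (Suc s). S)"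
    using finite_clique sym by (fastforce simp: cliques_def common_neighbours_def)
  show "(\<lambda>(S, v). (S - {v}, v)) ` (SIGMA S:cliques n F (Suc s). S)
      \<subseteq> (SIGMA R:cliques n F s. common_neighbours n F R)"
    using finite_clique by (fastforce simp: cliques_def common_neighbours_def card_Diff_singleton)
qed (auto simp: common_neighbours_def)

lemma sum_common_neighbours_eq_sum_clique_members:
  assumes sym: "\<And>u v. F u v = F v u"
  shows "(\<Sum>R\<in>cliques n F s. \<Sum>v\<in>common_neighbours n F R. g R v)
    = (\<Sum>S\<in>cliques n F (Suc s). \<Sum>v\<in>S. g (S - {v}) v)"
proof -
  have "(\<Sum>R\<in>cliques n F s. \<Sum>v\<in>common_neighbours n F R. g R v)
      = (\<Sum>(R, v)\<in>(SIGMA R:cliques n F s. common_neighbours n F R). g (insert v R - {v}) v)"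
    by (subst sum.Sigma) (auto simp: finite_cliques finite_common_neighbours common_neighbours_def
        intro!: sum.cong)
  also have "\<dots> = (\<Sum>(S, v)\<in>(SIGMA S:cliques n F (Suc s). S). g (S - {v}) v)"
    using sum.reindex_bij_betw[OF bij_betw_clique_extensions[of F, OF sym], of "\<lambda>(S, v). g (S - {v}) v"]
    by (simp add: case_prod_unfold)
  also have "\<dots> = (\<Sum>S\<in>cliques n F (Suc s). \<Sum>v\<in>S. g (S - {v}) v)"
    by (subst sum.Sigma) (auto simp: finite_cliques finite_clique)
  finally show ?thesis .
qed

lemma sum_card_common_neighbours:
  assumes sym: "\<And>u v. F u v = F v u"
  shows "(\<Sum>R\<in>cliques n F s. card (common_neighbours n F R)) = Suc s * card (cliques n F (Suc s))"
  using sum_common_neighbours_eq_sum_clique_members[of F, OF sym, where g = "\<lambda>_ _. 1::nat"]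
  by (simp add: cliques_def)

text \<open>A vertex w outside the common neighbourhood of the clique S is adjacent to all of S
  but at most one vertex, so it is a common neighbour of S - {v} for at most one v \<in> S.\<close>

lemma card_clique_members_with_common_neighbour_le:
  assumes S: "S \<in> cliques n F (Suc s)" and w: "w < n"
  shows "card {v\<in>S. w \<in> common_neighbours n F (S - {v})}
    \<le> (if w \<in> common_neighbours n F S then Suc s else 1)"
proof (cases "w \<in> common_neighbours n F S")
  case True
  have "card {v\<in>S. w \<in> common_neighbours n F (S - {v})} \<le> card S"
    using finite_clique[OF S] by (intro card_mono) auto
  then show ?thesis using True S by (simp add: cliques_def)
next
  case False
  then obtain u where "u \<in> S" "\<not> F u w \<or> u = w"
    using w unfolding common_neighbours_def by auto
  then have "{v\<in>S. w \<in> common_neighbours n F (S - {v})} \<subseteq> {u}"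
    unfolding common_neighbours_def by auto
  then have "card {v\<in>S. w \<in> common_neighbours n F (S - {v})} \<le> 1"
    using card_mono[of "{u}"] by fastforce
  then show ?thesis using False by simp
qed

lemma card_eq_sum_indicator: "finite B \<Longrightarrow> A \<subseteq> B \<Longrightarrow> card A = (\<Sum>x\<in>B. if x \<in> A then 1 else 0)"
  by (simp add: sum.inter_restrict[symmetric] Int_absorb1)

lemma sum_card_common_neighbours_delete_le:
  assumes S: "S \<in> cliques n F (Suc s)"
  shows "(\<Sum>v\<in>S. card (common_neighbours n F (S - {v}))) \<le> n + s * card (common_neighbours n F S)"
proof -
  let ?N = "common_neighbours n F"
  have sub: "?N X \<subseteq> {0..<n}" for X
    unfolding common_neighbours_def by auto
  have "(\<Sum>v\<in>S. card (?N (S - {v}))) = (\<Sum>w\<in>{0..<n}. \<Sum>v\<in>S. if w \<in> ?N (S - {v}) then 1 else 0)"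
    by (simp add: card_eq_sum_indicator[OF finite_atLeastLessThan sub] sum.swap[of _ S])
  also have "\<dots> = (\<Sum>w\<in>{0..<n}. card {v\<in>S. w \<in> ?N (S - {v})})"
    using card_eq_sum_indicator[OF finite_clique[OF S]] by simp
  also have "\<dots> \<le> (\<Sum>w\<in>{0..<n}. 1 + s * (if w \<in> ?N S then 1 else 0))"
    using card_clique_members_with_common_neighbour_le[OF S] by (intro sum_mono) fastforce
  also have "\<dots> = n + s * card (?N S)"
    by (simp only: sum.distrib sum_distrib_left[symmetric]
        card_eq_sum_indicator[OF finite_atLeastLessThan sub, symmetric]) simp
  finally show ?thesis .
qed

text \<open>Cauchy-Schwarz applied to the common neighbourhood sizes of the s-cliques.\<close>

lemma clique_counts_quadratic_ineq:
  fixes n :: nat and F :: "nat \<Rightarrow> nat \<Rightarrow> bool"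
  assumes sym: "\<And>u v. F u v = F v u"
  defines "k \<equiv> \<lambda>t. real (card (cliques n F t))"
  shows "(real (Suc s) * k (Suc s))\<^sup>2 \<le> k s * (real n * k (Suc s) + real s * (real s + 2) * k (Suc (Suc s)))"
proof -
  let ?c = "\<lambda>R. card (common_neighbours n F R)"
  have "(\<Sum>R\<in>cliques n F s. ?c R * ?c R) = (\<Sum>S\<in>cliques n F (Suc s). \<Sum>v\<in>S. ?c (S - {v}))"
    using sum_common_neighbours_eq_sum_clique_members[of F, OF sym, where s = s and g = "\<lambda>R v. ?c R"] by simp
  also have "\<dots> \<le> (\<Sum>S\<in>cliques n F (Suc s). n + s * ?c S)"
    by (intro sum_mono sum_card_common_neighbours_delete_le)
  also have "\<dots> = n * card (cliques n F (Suc s)) + s * (Suc (Suc s) * card (cliques n F (Suc (Suc s))))"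
    by (simp add: sum.distrib sum_distrib_left[symmetric] sum_card_common_neighbours[of F, OF sym, where s = "Suc s"])
  finally have "real (\<Sum>R\<in>cliques n F s. ?c R * ?c R)
      \<le> real (n * card (cliques n F (Suc s)) + s * (Suc (Suc s) * card (cliques n F (Suc (Suc s)))))"
    by (simp only: of_nat_le_iff)
  then have squares: "(\<Sum>R\<in>cliques n F s. (real (?c R))\<^sup>2)
      \<le> real n * k (Suc s) + real s * (real s + 2) * k (Suc (Suc s))"
    by (simp add: k_def power2_eq_square algebra_simps)
  have "(real (Suc s) * k (Suc s))\<^sup>2 = (\<Sum>R\<in>cliques n F s. real (?c R))\<^sup>2"
    using sum_card_common_neighbours[of F, OF sym, where s = s]
    unfolding k_def of_nat_sum[symmetric] by (simp add: algebra_simps)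
  also have "\<dots> \<le> (\<Sum>R\<in>cliques n F s. (real (?c R))\<^sup>2) * k s"
    unfolding k_def by (rule sum_squared_le_sum_of_squares)
  also have "\<dots> \<le> k s * (real n * k (Suc s) + real s * (real s + 2) * k (Suc (Suc s)))"
    using mult_right_mono[OF squares, of "k s"] by (simp add: k_def mult.commute)
  finally show ?thesis .
qed

section \<open>From the quadratic inequality to a lower bound\<close>

lemma quadratic_ineq_ratio_step:
  fixes a b c N x :: real and t :: nat
  assumes a: "a > 0" and b: "b > 0" and t: "t \<ge> 1"
    and ratio: "(real t + 1) * b \<ge> N * a * (1 - real t * x)"
    and quad: "((real t + 1) * b)\<^sup>2 \<le> a * (N * b + real t * (real t + 2) * c)"
  shows "(real t + 2) * c \<ge> N * b * (1 - (real t + 1) * x)"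
proof -
  have "b * ((real t + 1) * (N * a * (1 - real t * x)) - N * a)
      \<le> b * ((real t + 1) * ((real t + 1) * b) - N * a)"
    using ratio b by (intro mult_left_mono) auto
  also have "\<dots> \<le> real t * (real t + 2) * a * c"
    using quad by (simp add: power2_eq_square algebra_simps)
  finally have "(real t * a) * (N * b * (1 - (real t + 1) * x)) \<le> (real t * a) * ((real t + 2) * c)"
    by (simp add: algebra_simps)
  moreover have "real t * a > 0" using a t by simp
  ultimately show ?thesis using mult_le_cancel_left_pos by blast
qed

locale clique_count_sequence =
  fixes k :: "nat \<Rightarrow> real" and N x :: real and r :: nat
  assumes N_pos: "N > 0" and k_1: "k 1 = N" and k_2: "2 * k 2 \<ge> N * N * (1 - x)"
    and quadratic: "\<And>s. (real (Suc s) * k (Suc s))\<^sup>2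
      \<le> k s * (N * k (Suc s) + real s * (real s + 2) * k (Suc (Suc s)))"
    and rx: "real r * x < 1"
begin

lemma factor_pos: "t \<le> r \<Longrightarrow> 1 - real t * x > 0"
  using rx mult_right_mono[of "real t" "real r" x] mult_nonneg_nonpos[of "real t" x]
  by (cases "x \<ge> 0") auto

lemma ratio_bound:
  assumes "1 \<le> t" "t \<le> r"
  shows "k t > 0 \<and> (real t + 1) * k (t + 1) \<ge> N * k t * (1 - real t * x)"
  using assms
proof (induction t rule: nat_induct_at_least)
  case base
  then show ?case using N_pos k_1 k_2 by (simp add: algebra_simps numeral_2_eq_2)
next
  case (Suc t)
  then have a: "k t > 0" and ratio: "(real t + 1) * k (Suc t) \<ge> N * k t * (1 - real t * x)"
    by auto
  have "N * k t * (1 - real t * x) > 0"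
    using N_pos a factor_pos[of t] Suc.prems by simp
  then have b: "k (Suc t) > 0"
    using ratio by (smt (verit) of_nat_0_le_iff zero_less_mult_iff)
  have "(real t + 2) * k (Suc (Suc t)) \<ge> N * k (Suc t) * (1 - (real t + 1) * x)"
    using quadratic_ineq_ratio_step[OF a b Suc.hyps ratio] quadratic[of t] by (simp add: add.commute)
  then show ?case using b by (simp add: algebra_simps)
qed

lemma binomial_lower_bound:
  assumes "1 \<le> t" "t \<le> r"
  shows "k t \<ge> real (r choose t) * (N / real r) ^ t"
  using assms
proof (induction t rule: nat_induct_at_least)
  case base
  then show ?case using k_1 by simp
next
  case (Suc t)
  then have IH: "k t \<ge> real (r choose t) * (N / real r) ^ t" and t: "t < r"
    by auto
  have "x \<le> 1 / real r" using rx t by (simp add: field_simps)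
  then have "real t * x \<le> real t / real r"
    using mult_left_mono[of x "1 / real r" "real t"] by simp
  then have factor: "1 - real t * x \<ge> (real r - real t) / real r"
    using t by (simp add: diff_divide_distrib)
  have binom: "real (r - t) * real (r choose t) = real (Suc t) * real (r choose Suc t)"
    by (metis binomial_absorb_comp binomial_absorption of_nat_mult)
  have "(real t + 1) * (real (r choose Suc t) * (N / real r) ^ Suc t)
      = real (r - t) * real (r choose t) * (N / real r) ^ Suc t"
    by (simp only: binom) (simp add: algebra_simps add_divide_distrib)
  also have "\<dots> = N * (real (r choose t) * (N / real r) ^ t) * ((real r - real t) / real r)"
    using t by (simp add: of_nat_diff field_simps)
  also have "\<dots> \<le> N * k t * (1 - real t * x)"
    using IH factor t N_pos ratio_bound[of t] Suc.hyps by (intro mult_mono mult_left_mono) auto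
  also have "\<dots> \<le> (real t + 1) * k (Suc t)"
    using ratio_bound[of t] Suc by simp
  finally show ?case by (rule mult_left_le_imp_le) simp
qed

lemma lower_bound:
  assumes "r \<ge> 1"
  shows "(real r + 1) * k (r + 1) \<ge> N * (N / real r) ^ r * (1 - real r * x)"
proof -
  have "N * (N / real r) ^ r * (1 - real r * x) \<le> N * k r * (1 - real r * x)"
    using binomial_lower_bound[of r] assms N_pos factor_pos[of r] by simp
  also have "\<dots> \<le> (real r + 1) * k (r + 1)"
    using ratio_bound[of r] assms by simp
  finally show ?thesis .
qed

end

lemma clique_count_lower_bound:
  fixes k :: "nat \<Rightarrow> real" and N :: real and r :: nat
  assumes N: "N > 0" and r: "r \<ge> 1" and k1: "k 1 = N"
    and k2: "2 * k 2 \<ge> N * (N - 1) - N * N / (real r + 1)"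
    and quad: "\<And>s. (real (Suc s) * k (Suc s))\<^sup>2
      \<le> k s * (N * k (Suc s) + real s * (real s + 2) * k (Suc (Suc s)))"
    and delta_pos: "1 / ((real r + 1) * real r) - 1 / N > 0"
  shows "k (r + 1) \<ge> (1 / ((real r + 1) * real r) - 1 / N)
    * (real r * real r * (N / real r) ^ (r + 1) / (real r + 1))"
proof -
  define \<delta> where "\<delta> = 1 / ((real r + 1) * real r) - 1 / N"
  txt \<open>With this x the hypothesis on k(2) reads 2 k(2) \<ge> N^2 (1 - x), and 1 - r x = r \<delta>.\<close>
  define x where "x = 1 / N + 1 / (real r + 1)"
  have r0: "real r > 0" and r1: "real r + 1 > 0"
    using r by auto
  have "1 - real r * x = (1 - real r / (real r + 1)) - real r / N"
    unfolding x_def by (simp add: algebra_simps)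
  also have "1 - real r / (real r + 1) = 1 / (real r + 1)"
    using r1 by (simp add: field_simps)
  also have "\<dots> = real r * (1 / ((real r + 1) * real r))"
    using r0 by simp
  also have "real r * (1 / ((real r + 1) * real r)) - real r / N = real r * \<delta>"
    unfolding \<delta>_def by (simp add: right_diff_distrib)
  finally have factor: "1 - real r * x = real r * \<delta>" .
  interpret clique_count_sequence k N x r
  proof
    show "2 * k 2 \<ge> N * N * (1 - x)"
      using k2 N r1 by (simp add: x_def algebra_simps)
    have "real r * \<delta> > 0"
      using delta_pos r0 unfolding \<delta>_def by simp
    then show "real r * x < 1"
      using factor by linarith
  qed (use N k1 quad in auto)
  define P where "P = (N / real r) ^ r"
  have "real r * real r * \<delta> * (N / real r) ^ (r + 1) = N * P * (real r * \<delta>)"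
    using r0 unfolding P_def by (simp add: field_simps)
  also have "\<dots> \<le> (real r + 1) * k (r + 1)"
    using lower_bound[OF r] unfolding factor P_def .
  finally show ?thesis
    using r r1 unfolding \<delta>_def[symmetric] by (simp add: pos_divide_le_eq mult_ac)
qed

section \<open>Independent sets as cliques of the complement\<close>

definition complement_graph :: "nat \<Rightarrow> (nat \<Rightarrow> nat \<Rightarrow> bool) \<Rightarrow> nat \<Rightarrow> nat \<Rightarrow> bool" where
  "complement_graph n E u v \<longleftrightarrow> u < n \<and> v < n \<and> u \<noteq> v \<and> \<not> E u v"

lemma complement_graph_sym: "simple_graph n E \<Longrightarrow> complement_graph n E u v = complement_graph n E v u"
  unfolding complement_graph_def simple_graph_def by auto

lemma num_indep_sets_eq_card_cliques_complement:
  assumes "simple_graph n E"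
  shows "num_indep_sets n E s = card (cliques n (complement_graph n E) s)"
proof -
  have "{S. independent_set n E S \<and> card S = s} = cliques n (complement_graph n E) s"
  proof (intro equalityI subsetI)
    fix S assume "S \<in> {S. independent_set n E S \<and> card S = s}"
    then show "S \<in> cliques n (complement_graph n E) s"
      unfolding independent_set_def cliques_def complement_graph_def by auto
  next
    fix S assume S: "S \<in> cliques n (complement_graph n E) s"
    have "\<not> E u v" if "u \<in> S" "v \<in> S" for u v
    proof (cases "u = v")
      case True
      then show ?thesis using S that assms unfolding cliques_def simple_graph_def by auto
    next
      case False
      then show ?thesis using S that unfolding cliques_def complement_graph_def by auto
    qed
    then show "S \<in> {S. independent_set n E S \<and> card S = s}"
      using S unfolding independent_set_def cliques_def by auto
  qed
  then show ?thesis unfolding num_indep_sets_def by simp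
qed

lemma card_common_neighbours_complement_singleton:
  assumes G: "simple_graph n E" and u: "u < n"
  shows "real (card (common_neighbours n (complement_graph n E) {u}))
    = real n - 1 - (\<Sum>w\<in>{0..<n}. if E u w then 1 else 0)"
proof -
  let ?C = "common_neighbours n (complement_graph n E) {u}"
  let ?D = "{w\<in>{0..<n}. E u w}"
  have "{0..<n} - {u} = ?C \<union> ?D" and "?C \<inter> ?D = {}"
    using G u unfolding common_neighbours_def complement_graph_def simple_graph_def by auto
  then have "card ({0..<n} - {u}) = card ?C + card ?D"
    using card_Un_disjoint[of ?C ?D] by (simp add: finite_common_neighbours)
  then have "n - 1 = card ?C + card ?D"
    using u by simp
  moreover have "(\<Sum>w\<in>{0..<n}. if E u w then 1 else 0) = real (card ?D)"
    using sum.inter_filter[of "{0..<n}" "\<lambda>_. 1::real" "E u"] by simp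
  ultimately show ?thesis using u by (simp add: of_nat_diff)
qed

lemma two_card_cliques_2_complement:
  assumes G: "simple_graph n E"
  shows "2 * real (card (cliques n (complement_graph n E) 2))
    = real n * (real n - 1) - total_walk_weight n (\<lambda>i j. if E i j then 1 else 0) 1"
proof -
  have "2 * card (cliques n (complement_graph n E) 2)
      = (\<Sum>R\<in>cliques n (complement_graph n E) 1. card (common_neighbours n (complement_graph n E) R))"
    using sum_card_common_neighbours[of "complement_graph n E" n 1, OF complement_graph_sym[OF G]]
    by (simp add: numeral_2_eq_2)
  also have "\<dots> = (\<Sum>u\<in>{0..<n}. card (common_neighbours n (complement_graph n E) {u}))"
    unfolding cliques_1 by (subst sum.reindex) (auto simp: inj_on_def)
  also have "real \<dots> = (\<Sum>u\<in>{0..<n}. real n - 1 - (\<Sum>w\<in>{0..<n}. if E u w then 1 else 0))"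
    unfolding of_nat_sum using card_common_neighbours_complement_singleton[OF G] by (intro sum.cong) auto
  finally show ?thesis unfolding total_walk_weight_1 by (simp add: sum_subtractf)
qed

lemma num_indep_sets_lower_bound:
  assumes G: "simple_graph n E" and r: "r \<ge> 1"
    and degrees: "total_walk_weight n (\<lambda>i j. if E i j then 1 else 0) 1 \<le> real n * real n / (real r + 1)"
  shows "real (num_indep_sets n E (r + 1)) \<ge> (1 / ((real r + 1) * real r) - 1 / real n)
    * (real r * (real r - 1) * (real n / real r) ^ (r + 1) / (real r + 1))"
    (is "_ \<ge> ?\<delta> * ?Q")
proof (cases "n > 0 \<and> ?\<delta> > 0")
  case False
  have Q: "?Q \<ge> 0"
    using r by (intro divide_nonneg_nonneg mult_nonneg_nonneg) auto
  consider "n = 0" | "?\<delta> \<le> 0"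
    using False by linarith
  then have "?\<delta> * ?Q \<le> 0"
  proof cases
    case 1
    then show ?thesis by simp
  next
    case 2
    then show ?thesis using Q by (rule mult_nonpos_nonneg)
  qed
  then show ?thesis by simp
next
  case True
  let ?k = "\<lambda>t. real (card (cliques n (complement_graph n E) t))"
  have "2 * ?k 2 \<ge> real n * (real n - 1) - real n * real n / (real r + 1)"
    using two_card_cliques_2_complement[OF G] degrees by simp
  then have "?\<delta> * (real r * real r * (real n / real r) ^ (r + 1) / (real r + 1)) \<le> ?k (r + 1)"
    using True r card_cliques_1 clique_counts_quadratic_ineq[OF complement_graph_sym[OF G]]
    by (intro clique_count_lower_bound) auto
  moreover have "?\<delta> * ?Q \<le> ?\<delta> * (real r * real r * (real n / real r) ^ (r + 1) / (real r + 1))"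
    using True by (intro mult_left_mono divide_right_mono mult_right_mono) auto
  ultimately show ?thesis
    using num_indep_sets_eq_card_cliques_complement[OF G] by simp
qed

theorem theorem2p4:
  fixes n \<alpha> :: nat and E :: "nat \<Rightarrow> nat \<Rightarrow> bool"
  assumes "simple_graph n E"
    and "\<alpha> \<ge> 2"
    and "graph_spectral_radius n E \<le> real n / real \<alpha>"
  shows "real (num_indep_sets n E \<alpha>) \<ge>
    (1 / (real \<alpha> * (real \<alpha> - 1)) - 1 / real n) * ((real \<alpha> - 1) * (real \<alpha> - 2) / real \<alpha>)
      * (real n / (real \<alpha> - 1)) ^ \<alpha>"
proof -
  define r where "r = \<alpha> - 1"
  have r: "r \<ge> 1" "\<alpha> = r + 1"
    using assms(2) unfolding r_def by auto
  have "total_walk_weight n (\<lambda>i j. if E i j then 1 else 0) 1 \<le> real n * graph_spectral_radius n E"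
    by (rule degree_sum_le_spectral_radius[OF assms(1)])
  also have "\<dots> \<le> real n * real n / (real r + 1)"
    using mult_left_mono[OF assms(3), of "real n"] r by (simp add: add.commute)
  finally have "real (num_indep_sets n E (r + 1)) \<ge> (1 / ((real r + 1) * real r) - 1 / real n)
      * (real r * (real r - 1) * (real n / real r) ^ (r + 1) / (real r + 1))"
    by (rule num_indep_sets_lower_bound[OF assms(1) r(1)])
  then show ?thesis
    unfolding r(2) using r(1) by (simp add: add.commute)
qed

end
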